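(* Let $S\subseteq\{0,1\}^n$, $f\in[0,1/2]$, $m>0$, $T>0$ integers, and let $h_m^1,\dots,h_m^T$ be hash functions sampled independently from $\mathcal{H}^f_{m\times n}$. Let $Y_k=\mathbb{I}[S(h_m^k)\ge1]$, $Y=\sum_{k=1}^T Y_k$, and $\Pr_{\mathrm{est}}[S(h)\ge1]=Y/T$. Let $\kappa>0$ and $c>0$. Define the random variable $\mathcal{B}$ to equal $\frac{2^m c}{1+\kappa}$ if $\Pr_{\mathrm{est}}[S(h)\ge1]\ge c$, and $0$ otherwise. Then $$\Pr\left[|S|\ge\mathcal{B}\right]\ge 1-\exp\left(-\frac{\kappa^2cT}{(1+\kappa)(2+\kappa)}\right).$$
   Context: For integers $1\le m\le n$ and $f\in[0,1/2]$, sampling $h$ from $\mathcal{H}^f_{m\times n}$ means $h(x)=Ax+b\bmod 2$ with $A\in\{0,1\}^{m\times n}$ having i.i.d. entries with $\Pr[A_{ij}=1]=f$ and $b\in\{0,1\}^m$ uniform and independent of $A$. For $S\subseteq\{0,1\}^n$, $S(h)=|\{x\in S:h(x)=0\}|$. *)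

theory Defs
  imports "HOL-Probability.Probability"
begin

fun iid_list :: "nat \<Rightarrow> 'a pmf \<Rightarrow> 'a list pmf" where
  "iid_list 0 p = return_pmf []"
| "iid_list (Suc k) p = bind_pmf p (\<lambda>x. bind_pmf (iid_list k p) (\<lambda>xs. return_pmf (x # xs)))"

text \<open>Vectors in {0,1}^n are bool lists of length n; a hash h(x) = Ax + b mod 2 is
  the pair (A, b) with A a list of m rows (each a bool list of length n) and b a bool list of length m.\<close>
type_synonym hash = "bool list list \<times> bool list"

definition hash_family :: "real \<Rightarrow> nat \<Rightarrow> nat \<Rightarrow> hash pmf" where
  "hash_family f m n =
     bind_pmf (iid_list m (iid_list n (bernoulli_pmf f))) (\<lambda>A.
     bind_pmf (iid_list m (bernoulli_pmf (1/2))) (\<lambda>b. return_pmf (A, b)))"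

definition dot2 :: "bool list \<Rightarrow> bool list \<Rightarrow> bool" where
  "dot2 r x = odd (length (filter id (map2 (\<and>) r x)))"

definition hash_zero :: "hash \<Rightarrow> bool list \<Rightarrow> bool" where
  "hash_zero h x = (\<forall>i < length (snd h). dot2 (fst h ! i) x = snd h ! i)"

definition S_count :: "bool list set \<Rightarrow> hash \<Rightarrow> nat" where
  "S_count S h = card {x \<in> S. hash_zero h x}"

end

theory Submission imports Defs begin

text \<open>When \<open>|S| \<ge> 2^m c / (1 + \<kappa>)\<close> there is nothing to prove; otherwise the bound fails only if
  at least \<open>c T\<close> of the \<open>T\<close> independent hashes have a zero in \<open>S\<close>. A fixed \<open>x\<close> satisfies
  \<open>h(x) = 0\<close> with probability at most \<open>2^-m\<close>, because \<open>b\<close> is uniform, so by the union bound each hash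
  hits \<open>S\<close> with probability \<open>p \<le> |S| 2^-m < c / (1 + \<kappa>)\<close>. The number of hits is binomial with
  parameter \<open>p\<close>, and the multiplicative Chernoff bound with \<open>e^\<kappa>\<close> replaced by \<open>1 + \<kappa>\<close>, together with
  \<open>ln (1 + \<kappa>) \<ge> 2\<kappa> / (2 + \<kappa>)\<close>, bounds its upper tail by the claimed exponential.\<close>

lemma iid_list_Suc_eq_map_pair:
  "iid_list (Suc k) p = map_pmf (\<lambda>(x, xs). x # xs) (pair_pmf p (iid_list k p))"
  by (simp add: pair_pmf_def map_bind_pmf map_return_pmf)

lemma length_of_set_pmf_iid_list: "xs \<in> set_pmf (iid_list k p) \<Longrightarrow> length xs = k"
  by (induction k arbitrary: xs) (auto simp: set_bind_pmf)

lemma pmf_iid_list_le_power: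
  assumes "\<And>x. pmf p x \<le> q"
  shows "pmf (iid_list k p) xs \<le> q ^ k"
proof (induction k arbitrary: xs)
  case 0
  then show ?case by (simp add: pmf_le_1)
next
  case (Suc k)
  have q: "0 \<le> q" by (rule order_trans[OF pmf_nonneg assms])
  show ?case
  proof (cases xs)
    case Nil
    then have "xs \<notin> set_pmf (iid_list (Suc k) p)" using length_of_set_pmf_iid_list by fastforce
    then show ?thesis using q by (simp add: set_pmf_eq)
  next
    case (Cons y ys)
    have inj: "inj (\<lambda>(x :: 'a, xs). x # xs)" by (auto simp: inj_def)
    have "pmf (iid_list (Suc k) p) xs = pmf p y * pmf (iid_list k p) ys"
      unfolding iid_list_Suc_eq_map_pair Cons
      using pmf_map_inj'[OF inj, of "pair_pmf p (iid_list k p)" "(y, ys)"] by (simp add: pmf_pair)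
    also have "\<dots> \<le> q * q ^ k"
      by (rule mult_mono) (use assms Suc q in auto)
    finally show ?thesis by simp
  qed
qed

lemma map_pmf_eq_bernoulli_pmf: "map_pmf Q P = bernoulli_pmf (measure_pmf.prob P {x. Q x})"
proof (rule pmf_eqI)
  fix b
  have "measure_pmf.prob P {x. \<not> Q x} = 1 - measure_pmf.prob P {x. Q x}"
    using measure_pmf.prob_compl[of "{x. Q x}" P] by (simp add: Compl_eq_Diff_UNIV[symmetric] Collect_neg_eq)
  then show "pmf (map_pmf Q P) b = pmf (bernoulli_pmf (measure_pmf.prob P {x. Q x})) b"
    by (cases b) (simp_all add: pmf_map vimage_def)
qed

lemma map_pmf_length_filter_iid_list:
  "map_pmf (\<lambda>xs. length (filter Q xs)) (iid_list T P) = binomial_pmf T (measure_pmf.prob P {x. Q x})"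
proof (induction T)
  case 0
  then show ?case by (simp add: binomial_pmf_0)
next
  case (Suc T)
  let ?p = "measure_pmf.prob P {x. Q x}"
  have "map_pmf (\<lambda>xs. length (filter Q xs)) (iid_list (Suc T) P) =
     bind_pmf P (\<lambda>x. bind_pmf (map_pmf (\<lambda>xs. length (filter Q xs)) (iid_list T P))
       (\<lambda>k. return_pmf ((if Q x then 1 else 0) + k)))"
    by (auto simp: map_bind_pmf map_return_pmf bind_map_pmf intro!: bind_pmf_cong)
  also have "\<dots> = bind_pmf (map_pmf Q P)
      (\<lambda>b. bind_pmf (binomial_pmf T ?p) (\<lambda>k. return_pmf ((if b then 1 else 0) + k)))"
    by (simp add: Suc bind_map_pmf)
  also have "\<dots> = binomial_pmf (Suc T) ?p"
    by (simp add: map_pmf_eq_bernoulli_pmf binomial_pmf_Suc)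
  finally show ?case .
qed

lemma map_pmf_card_nth_iid_list:
  "map_pmf (\<lambda>xs. card {k. k < T \<and> Q (xs ! k)}) (iid_list T P)
     = binomial_pmf T (measure_pmf.prob P {x. Q x})"
proof -
  have "map_pmf (\<lambda>xs. card {k. k < T \<and> Q (xs ! k)}) (iid_list T P)
      = map_pmf (\<lambda>xs. length (filter Q xs)) (iid_list T P)"
    by (rule map_pmf_cong) (auto simp: length_filter_conv_card dest: length_of_set_pmf_iid_list)
  then show ?thesis by (simp add: map_pmf_length_filter_iid_list)
qed

lemma prob_hash_zero_le: "measure_pmf.prob (hash_family f m n) {h. hash_zero h x} \<le> (1/2) ^ m"
proof -
  let ?PA = "iid_list m (iid_list n (bernoulli_pmf f))"
  let ?PB = "iid_list m (bernoulli_pmf (1/2))"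
  have offset_bound: "emeasure ?PB {b. hash_zero (A, b) x} \<le> ennreal ((1/2) ^ m)" for A
  proof -
    define b\<^sub>A where "b\<^sub>A = map (\<lambda>i. dot2 (A ! i) x) [0..<m]"
    have "{b. hash_zero (A, b) x} \<inter> set_pmf ?PB \<subseteq> {b\<^sub>A}"
      by (auto simp: hash_zero_def b\<^sub>A_def dest!: length_of_set_pmf_iid_list intro!: nth_equalityI)
    then have "emeasure ?PB {b. hash_zero (A, b) x} \<le> emeasure ?PB {b\<^sub>A}"
      by (subst emeasure_Int_set_pmf[symmetric]) (rule emeasure_mono, simp_all)
    also have "\<dots> \<le> ennreal ((1/2) ^ m)"
      by (simp add: emeasure_pmf_single pmf_iid_list_le_power)
    finally show ?thesis .
  qed
  have "emeasure (hash_family f m n) {h. hash_zero h x} =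
        (\<integral>\<^sup>+A. emeasure ?PB {b. hash_zero (A, b) x} \<partial>?PA)"
    unfolding hash_family_def by (simp add: map_pmf_def[symmetric] vimage_def)
  also have "\<dots> \<le> (\<integral>\<^sup>+A. ennreal ((1/2) ^ m) \<partial>?PA)"
    by (intro nn_integral_mono offset_bound)
  finally show ?thesis
    by (simp add: measure_pmf.emeasure_eq_measure)
qed

lemma prob_S_count_ge_1_le:
  assumes "finite S"
  shows "measure_pmf.prob (hash_family f m n) {h. 1 \<le> S_count S h} \<le> real (card S) * (1/2) ^ m"
proof -
  have "{h. 1 \<le> S_count S h} = (\<Union>x\<in>S. {h. hash_zero h x})"
    using assms by (auto simp: S_count_def Suc_le_eq card_gt_0_iff)
  then have "measure_pmf.prob (hash_family f m n) {h. 1 \<le> S_count S h}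
      \<le> (\<Sum>x\<in>S. measure_pmf.prob (hash_family f m n) {h. hash_zero h x})"
    using assms by (simp add: measure_pmf.finite_measure_subadditive_finite)
  also have "\<dots> \<le> (\<Sum>x\<in>S. (1/2) ^ m)"
    by (intro sum_mono prob_hash_zero_le)
  finally show ?thesis by simp
qed

lemma ln_one_plus_ge:
  fixes k :: real
  assumes "0 \<le> k"
  shows "2 * k / (2 + k) \<le> ln (1 + k)"
proof -
  let ?g = "\<lambda>x::real. ln (1 + x) - 2 * x / (2 + x)"
  have "?g 0 \<le> ?g k"
  proof (rule DERIV_nonneg_imp_nondecreasing[OF assms])
    fix x :: real
    assume x: "0 \<le> x" "x \<le> k"
    have "(?g has_real_derivative (1 / (1 + x) - 4 / (2 + x)^2)) (at x)"
      using x by (auto intro!: derivative_eq_intros simp: field_simps power2_eq_square)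
    moreover have "1 / (1 + x) - 4 / (2 + x)^2 = x^2 / ((1 + x) * (2 + x)^2)"
      using x by (simp add: divide_simps) algebra
    ultimately show "\<exists>y. (?g has_real_derivative y) (at x) \<and> 0 \<le> y"
      using x by auto
  qed
  then show ?thesis by simp
qed

lemma sum_pmf_binomial_times_power:
  assumes "0 \<le> p" "p \<le> 1"
  shows "(\<Sum>k\<le>T. pmf (binomial_pmf T p) k * z ^ k) = (p * z + (1 - p)) ^ T"
proof -
  have "(\<Sum>k\<le>T. pmf (binomial_pmf T p) k * z ^ k)
      = (\<Sum>k\<le>T. of_nat (T choose k) * (p * z) ^ k * (1 - p) ^ (T - k))"
    using assms by (simp add: power_mult_distrib algebra_simps)
  also have "\<dots> = (p * z + (1 - p)) ^ T"
    by (simp add: binomial_ring)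
  finally show ?thesis .
qed

lemma binomial_tail_le_generating_function:
  fixes p z a :: real
  assumes "0 \<le> p" "p \<le> 1" "1 \<le> z"
  shows "measure_pmf.prob (binomial_pmf T p) {k. a \<le> real k} \<le> (p * z + (1 - p)) ^ T / z powr a"
proof -
  let ?M = "binomial_pmf T p"
  have "measure_pmf.prob ?M {k. a \<le> real k} \<le> (\<Sum>k\<in>{k. a \<le> real k} \<inter> {..T}. pmf ?M k)"
    using set_pmf_binomial_eq[OF assms(1,2)]
    by (subst measure_Int_set_pmf[symmetric], subst measure_measure_pmf_finite[symmetric])
       (auto intro!: measure_pmf.finite_measure_mono)
  also have "\<dots> \<le> (\<Sum>k\<le>T. pmf ?M k * z ^ k) / z powr a"
  proof -
    have "pmf ?M k \<le> pmf ?M k * z ^ k / z powr a" if "a \<le> real k" for k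
    proof -
      have "pmf ?M k * z powr a \<le> pmf ?M k * z ^ k"
        using that assms(3) powr_mono[of a "real k" z] by (intro mult_left_mono) (auto simp: powr_realpow)
      then show ?thesis using assms(3) by (simp add: field_simps)
    qed
    then show ?thesis
      unfolding sum_divide_distrib using assms(3)
      by (intro order_trans[OF sum_mono sum_mono2]) auto
  qed
  also have "\<dots> = (p * z + (1 - p)) ^ T / z powr a"
    by (simp add: sum_pmf_binomial_times_power[OF assms(1,2)])
  finally show ?thesis .
qed

lemma binomial_upper_tail_le:
  fixes p \<kappa> c :: real and T :: nat
  assumes p: "0 \<le> p" "p \<le> 1" "p \<le> c / (1 + \<kappa>)" and \<kappa>: "0 < \<kappa>" and c: "0 < c"
  shows "measure_pmf.prob (binomial_pmf T p) {k. c * real T \<le> real k}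
         \<le> exp (- (\<kappa>\<^sup>2 * c * real T / ((1 + \<kappa>) * (2 + \<kappa>))))"
proof -
  have "measure_pmf.prob (binomial_pmf T p) {k. c * real T \<le> real k}
      \<le> (p * (1 + \<kappa>) + (1 - p)) ^ T / (1 + \<kappa>) powr (c * real T)"
    using p \<kappa> by (intro binomial_tail_le_generating_function) auto
  also have "\<dots> \<le> exp (p * \<kappa>) ^ T / (1 + \<kappa>) powr (c * real T)"
    using exp_ge_add_one_self[of "p * \<kappa>"] p \<kappa>
    by (intro divide_right_mono power_mono) (auto simp: algebra_simps)
  also have "\<dots> = exp (real T * p * \<kappa> - c * real T * ln (1 + \<kappa>))"
    using \<kappa> by (simp add: powr_def exp_diff exp_of_nat_mult[symmetric] mult.assoc)
  also have "\<dots> \<le> exp (- (\<kappa>\<^sup>2 * c * real T / ((1 + \<kappa>) * (2 + \<kappa>))))"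
  proof -
    have "real T * p * \<kappa> \<le> real T * (c / (1 + \<kappa>)) * \<kappa>"
      using p \<kappa> by (intro mult_right_mono mult_left_mono) auto
    moreover have "c * real T * (2 * \<kappa> / (2 + \<kappa>)) \<le> c * real T * ln (1 + \<kappa>)"
      using ln_one_plus_ge[of \<kappa>] \<kappa> c by (intro mult_left_mono) auto
    moreover have "real T * (c / (1 + \<kappa>)) * \<kappa> - c * real T * (2 * \<kappa> / (2 + \<kappa>))
         = - (\<kappa>\<^sup>2 * c * real T / ((1 + \<kappa>) * (2 + \<kappa>)))"
      using \<kappa> by (simp add: divide_simps) algebra
    ultimately show ?thesis by simp
  qed
  finally show ?thesis .
qed

theorem theorem3:
  fixes S :: "bool list set" and n m T :: nat and f \<kappa> c :: real
  assumes "S \<subseteq> {x. length x = n}"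
    and "0 \<le> f" and "f \<le> 1/2"
    and "0 < m" and "m \<le> n" and "0 < T"
    and "0 < \<kappa>" and "0 < c"
  shows "measure_pmf.prob (iid_list T (hash_family f m n))
           {hs. real (card S) \<ge>
              (let Y = card {k. k < T \<and> S_count S (hs ! k) \<ge> 1}
               in if real Y / real T \<ge> c then 2 ^ m * c / (1 + \<kappa>) else 0)}
         \<ge> 1 - exp (- (\<kappa>\<^sup>2 * c * real T / ((1 + \<kappa>) * (2 + \<kappa>))))"
    (is "measure_pmf.prob ?M ?E \<ge> 1 - ?R")
proof (cases "2 ^ m * c / (1 + \<kappa>) \<le> real (card S)")
  case True
  then have "?E = UNIV" by (auto simp: Let_def)
  then show ?thesis by simp
next
  case False
  let ?Y = "\<lambda>hs. card {k. k < T \<and> 1 \<le> S_count S (hs ! k)}"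
  let ?p = "measure_pmf.prob (hash_family f m n) {h. 1 \<le> S_count S h}"
  have "finite S"
    using assms(1) finite_lists_length_eq[of "UNIV :: bool set" n] by (auto intro: finite_subset)
  then have "?p \<le> real (card S) * (1/2) ^ m" by (rule prob_S_count_ge_1_le)
  also have "\<dots> \<le> c / (1 + \<kappa>)"
    using False assms by (simp add: field_simps power_divide)
  finally have p: "?p \<le> c / (1 + \<kappa>)" .
  have "measure_pmf.prob ?M (UNIV - ?E) \<le> measure_pmf.prob ?M {hs. c * real T \<le> real (?Y hs)}"
    using False assms(6) by (intro measure_pmf.finite_measure_mono) (auto simp: Let_def field_simps)
  also have "\<dots> = measure_pmf.prob (binomial_pmf T ?p) {k. c * real T \<le> real k}"
    by (simp flip: map_pmf_card_nth_iid_list)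
  also have "\<dots> \<le> ?R"
    using p assms by (intro binomial_upper_tail_le) auto
  finally show ?thesis
    using measure_pmf.prob_compl[of ?E ?M] by (simp add: Compl_eq_Diff_UNIV)
qed

end
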